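(* Let $\mathfrak S$ be a commutative Noetherian semiring. Then for every set $\sigma_{\mathfrak S}$ of ideals of $\mathfrak S$, the space $\sigma_{\mathfrak S}$ with the ideal topology is quasi-compact.
   Context: A semiring $(\mathfrak S,+,0,\cdot,1)$ has $(\mathfrak S,+,0)$ a commutative monoid, $(\mathfrak S,\cdot,1)$ a monoid, $0r=r0=0$, and two-sided distributivity; all semirings are commutative. An ideal is a nonempty proper subset closed under addition and under multiplication by elements of $\mathfrak S$. Noetherian means every ideal is finitely generated (equivalently ascending chain condition on ideals). For an ideal $\mathfrak a$, $\mathfrak a^{\uparrow}=\{\mathfrak x\in\sigma_{\mathfrak S}\mid\mathfrak a\subseteq\mathfrak x\}$; the ideal topology on $\sigma_{\mathfrak S}$ has the sets $\mathfrak a^{\uparrow}$ ($\mathfrak a$ any ideal) as a subbasis of closed sets. Quasi-compact means every open cover has a finite subcover. *)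

theory Defs
  imports "HOL-Analysis.Analysis"
begin

text \<open>Commutative semirings with 0 and 1 (0 absorbing), without requiring 0 \<noteq> 1:
  the class constraint {comm_semiring_0, comm_monoid_mult} is used below.\<close>

definition semiring_ideal :: "'a::{comm_semiring_0,comm_monoid_mult} set \<Rightarrow> bool" where
  "semiring_ideal I \<longleftrightarrow> I \<noteq> {} \<and> I \<noteq> UNIV
     \<and> (\<forall>x\<in>I. \<forall>y\<in>I. x + y \<in> I) \<and> (\<forall>r. \<forall>x\<in>I. r * x \<in> I)"

definition ideal_span :: "'a::{comm_semiring_0,comm_monoid_mult} set \<Rightarrow> 'a set" where
  "ideal_span F = {y. \<exists>G r. finite G \<and> G \<subseteq> F \<and> y = (\<Sum>a\<in>G. r a * a)}"

definition finitely_generated_ideal :: "'a::{comm_semiring_0,comm_monoid_mult} set \<Rightarrow> bool" where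
  "finitely_generated_ideal I \<longleftrightarrow> (\<exists>F. finite F \<and> F \<subseteq> I \<and> I = ideal_span F)"

definition noetherian_semiring :: "'a::{comm_semiring_0,comm_monoid_mult} itself \<Rightarrow> bool" where
  "noetherian_semiring TYPE('a) \<longleftrightarrow>
     (\<forall>I::'a set. semiring_ideal I \<longrightarrow> finitely_generated_ideal I)"

definition up_set :: "'a set set \<Rightarrow> 'a set \<Rightarrow> 'a set set" where
  "up_set \<sigma> a = {x \<in> \<sigma>. a \<subseteq> x}"

text \<open>Ideal topology on sigma: closed subbasis {a\<up> | a ideal}; so the open subbasis
  consists of complements in sigma (together with sigma itself, which is always open).\<close>
definition ideal_topology :: "'a::{comm_semiring_0,comm_monoid_mult} set set \<Rightarrow> 'a set topology" where
  "ideal_topology \<sigma> = topology_generated_by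
     (insert \<sigma> {\<sigma> - up_set \<sigma> a | a. semiring_ideal a})"

end

theory Submission
  imports Defs
begin

text \<open>By the Alexander subbase lemma it suffices to find finite subcovers of covers of \<open>\<sigma>\<close> by
  subbasic open sets \<open>\<sigma> - a\<up>\<close>. Such a cover means that no ideal in \<open>\<sigma>\<close> contains the union \<open>U\<close> of the sets \<open>a\<close>
  involved. Noetherianity provides a finite \<open>G \<subseteq> U\<close> generating everything \<open>U\<close> generates, and
  \<open>G\<close> already lies in the union of finitely many of the \<open>a\<close>; an ideal of \<open>\<sigma>\<close> containing these
  finitely many \<open>a\<close> would contain \<open>U\<close>.\<close>

lemma semiring_ideal_zero:
  assumes "semiring_ideal I"
  shows "0 \<in> I"
proof -
  from assms obtain y where "y \<in> I"
    unfolding semiring_ideal_def by blast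
  then have "0 * y \<in> I"
    using assms unfolding semiring_ideal_def by blast
  then show ?thesis by simp
qed

lemma ideal_span_least:
  fixes I :: "'a::{comm_semiring_0,comm_monoid_mult} set"
  assumes zero: "0 \<in> I"
    and add: "\<And>x y. x \<in> I \<Longrightarrow> y \<in> I \<Longrightarrow> x + y \<in> I"
    and mult: "\<And>r x. x \<in> I \<Longrightarrow> r * x \<in> I"
    and "G \<subseteq> I"
  shows "ideal_span G \<subseteq> I"
proof
  fix y assume "y \<in> ideal_span G"
  then obtain H r where H: "finite H" "H \<subseteq> G" and y: "y = (\<Sum>a\<in>H. r a * a)"
    unfolding ideal_span_def by blast
  have "(\<Sum>a\<in>H. r a * a) \<in> I"
    using H
  proof (induction H rule: finite_induct)
    case empty
    then show ?case using zero by simp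
  next
    case (insert h H)
    then have "h \<in> I" using \<open>G \<subseteq> I\<close> by blast
    then show ?case using insert by (simp add: add mult)
  qed
  then show "y \<in> I" using y by simp
qed

lemma ideal_span_subset_ideal:
  assumes "semiring_ideal I" "G \<subseteq> I"
  shows "ideal_span G \<subseteq> I"
  using assms semiring_ideal_zero[OF assms(1)]
  by (intro ideal_span_least) (auto simp: semiring_ideal_def)

lemma ideal_span_mono:
  "F \<subseteq> G \<Longrightarrow> ideal_span F \<subseteq> ideal_span G"
  unfolding ideal_span_def by blast

lemma subset_ideal_span:
  fixes U :: "'a::{comm_semiring_0,comm_monoid_mult} set"
  shows "U \<subseteq> ideal_span U"
proof
  fix a assume "a \<in> U"
  then show "a \<in> ideal_span U"
    unfolding ideal_span_def by (intro CollectI exI[of _ "{a}"] exI[of _ "\<lambda>_. 1"]) simp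
qed

lemma zero_in_ideal_span: "0 \<in> ideal_span U"
  unfolding ideal_span_def by (intro CollectI exI[of _ "{}"]) simp

lemma ideal_span_add:
  fixes U :: "'a::{comm_semiring_0,comm_monoid_mult} set"
  assumes "y \<in> ideal_span U" "z \<in> ideal_span U"
  shows "y + z \<in> ideal_span U"
proof -
  obtain G r where G: "finite G" "G \<subseteq> U" and y: "y = (\<Sum>a\<in>G. r a * a)"
    using assms(1) unfolding ideal_span_def by blast
  obtain H s where H: "finite H" "H \<subseteq> U" and z: "z = (\<Sum>a\<in>H. s a * a)"
    using assms(2) unfolding ideal_span_def by blast
  define r' where "r' a = (if a \<in> G then r a else 0)" for a
  define s' where "s' a = (if a \<in> H then s a else 0)" for a
  have "y = (\<Sum>a\<in>G \<union> H. r' a * a)"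
    unfolding y r'_def by (rule sum.mono_neutral_cong_left) (use G H in auto)
  moreover have "z = (\<Sum>a\<in>G \<union> H. s' a * a)"
    unfolding z s'_def by (rule sum.mono_neutral_cong_left) (use G H in auto)
  ultimately have "y + z = (\<Sum>a\<in>G \<union> H. (r' a + s' a) * a)"
    by (simp add: sum.distrib distrib_right)
  then show ?thesis
    unfolding ideal_span_def
    by (intro CollectI exI[of _ "G \<union> H"] exI[of _ "\<lambda>a. r' a + s' a"]) (use G H in simp)
qed

lemma ideal_span_mult:
  fixes U :: "'a::{comm_semiring_0,comm_monoid_mult} set"
  assumes "y \<in> ideal_span U"
  shows "c * y \<in> ideal_span U"
proof -
  obtain G r where G: "finite G" "G \<subseteq> U" and y: "y = (\<Sum>a\<in>G. r a * a)"
    using assms unfolding ideal_span_def by blast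
  then have "c * y = (\<Sum>a\<in>G. (c * r a) * a)"
    by (simp add: sum_distrib_left mult.assoc)
  then show ?thesis
    unfolding ideal_span_def
    by (intro CollectI exI[of _ G] exI[of _ "\<lambda>a. c * r a"]) (use G in simp)
qed

lemma ideal_span_subset_ideal_span:
  fixes F :: "'a::{comm_semiring_0,comm_monoid_mult} set"
  assumes "F \<subseteq> ideal_span G"
  shows "ideal_span F \<subseteq> ideal_span G"
  using assms by (intro ideal_span_least zero_in_ideal_span ideal_span_add ideal_span_mult)

lemma semiring_ideal_ideal_span:
  assumes "ideal_span U \<noteq> UNIV"
  shows "semiring_ideal (ideal_span U)"
  unfolding semiring_ideal_def
  using assms zero_in_ideal_span ideal_span_add ideal_span_mult by blast

lemma ideal_span_one: "ideal_span {1 :: 'a::{comm_semiring_0,comm_monoid_mult}} = UNIV"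
proof -
  have "y * 1 \<in> ideal_span {1}" for y :: 'a
    using subset_ideal_span ideal_span_mult by blast
  then show ?thesis by auto
qed

lemma ideal_span_finite_subset:
  assumes "y \<in> ideal_span U"
  obtains G where "finite G" "G \<subseteq> U" "y \<in> ideal_span G"
proof -
  obtain G r where G: "finite G" "G \<subseteq> U" and y: "y = (\<Sum>a\<in>G. r a * a)"
    using assms unfolding ideal_span_def by blast
  have "y \<in> ideal_span G"
    unfolding ideal_span_def by (intro CollectI exI[of _ G] exI[of _ r]) (use G y in simp)
  then show ?thesis using G that by blast
qed

lemma finite_subset_ideal_span:
  assumes "finite F" "F \<subseteq> ideal_span U"
  obtains G where "finite G" "G \<subseteq> U" "F \<subseteq> ideal_span G"
proof -
  have "\<forall>f\<in>F. \<exists>G. finite G \<and> G \<subseteq> U \<and> f \<in> ideal_span G"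
    using assms(2) by (metis ideal_span_finite_subset subsetD)
  then obtain Gf where Gf: "\<And>f. f \<in> F \<Longrightarrow> finite (Gf f) \<and> Gf f \<subseteq> U \<and> f \<in> ideal_span (Gf f)"
    by metis
  have "f \<in> ideal_span (\<Union>f\<in>F. Gf f)" if "f \<in> F" for f
    using Gf[OF that] ideal_span_mono[of "Gf f" "\<Union>f\<in>F. Gf f"] that by blast
  moreover have "finite (\<Union>f\<in>F. Gf f)" "(\<Union>f\<in>F. Gf f) \<subseteq> U"
    using Gf assms(1) by auto
  ultimately show ?thesis using that by blast
qed

lemma noetherian_ideal_span_finitely_generated:
  fixes U :: "'a::{comm_semiring_0,comm_monoid_mult} set"
  assumes "noetherian_semiring TYPE('a)"
  obtains F where "finite F" "F \<subseteq> ideal_span U" "ideal_span F = ideal_span U"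
proof (cases "ideal_span U = UNIV")
  case True
  then show ?thesis using that[of "{1}"] ideal_span_one by simp
next
  case False
  then have "finitely_generated_ideal (ideal_span U)"
    using assms semiring_ideal_ideal_span unfolding noetherian_semiring_def by blast
  then show ?thesis
    using that unfolding finitely_generated_ideal_def by (metis (no_types))
qed

lemma noetherian_finite_subset_spans:
  fixes U :: "'a::{comm_semiring_0,comm_monoid_mult} set"
  assumes "noetherian_semiring TYPE('a)"
  obtains G where "finite G" "G \<subseteq> U" "U \<subseteq> ideal_span G"
proof -
  obtain F where F: "finite F" "F \<subseteq> ideal_span U" "ideal_span F = ideal_span U"
    using noetherian_ideal_span_finitely_generated[OF assms] .
  obtain G where G: "finite G" "G \<subseteq> U" "F \<subseteq> ideal_span G"
    using finite_subset_ideal_span[OF F(1,2)] .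
  have "U \<subseteq> ideal_span F"
    using subset_ideal_span F(3) by blast
  also have "\<dots> \<subseteq> ideal_span G"
    using ideal_span_subset_ideal_span[OF G(3)] .
  finally show ?thesis using that G(1,2) by blast
qed

lemma noetherian_up_set_complements_finite_subcover:
  fixes \<sigma> :: "'a::{comm_semiring_0,comm_monoid_mult} set set"
  assumes "noetherian_semiring TYPE('a)"
    and ideals: "\<forall>x\<in>\<sigma>. semiring_ideal x"
    and cover: "\<sigma> \<subseteq> (\<Union>a\<in>A. \<sigma> - up_set \<sigma> a)"
  obtains A' where "finite A'" "A' \<subseteq> A" "\<sigma> \<subseteq> (\<Union>a\<in>A'. \<sigma> - up_set \<sigma> a)"
proof -
  obtain G where G: "finite G" "G \<subseteq> \<Union>A" "\<Union>A \<subseteq> ideal_span G"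
    using noetherian_finite_subset_spans[OF assms(1)] .
  obtain A' where A': "finite A'" "A' \<subseteq> A" "G \<subseteq> \<Union>A'"
    using finite_subset_Union[OF G(1,2)] by blast
  have "x \<in> (\<Union>a\<in>A'. \<sigma> - up_set \<sigma> a)" if x: "x \<in> \<sigma>" for x
  proof (rule ccontr)
    assume "x \<notin> (\<Union>a\<in>A'. \<sigma> - up_set \<sigma> a)"
    then have "\<Union>A' \<subseteq> x"
      using x unfolding up_set_def by auto
    then have "ideal_span G \<subseteq> x"
      using A'(3) ideals x by (intro ideal_span_subset_ideal) auto
    then have "\<forall>a\<in>A. x \<in> up_set \<sigma> a"
      using G(3) x unfolding up_set_def by auto
    then show False
      using cover x by auto
  qed
  then show ?thesis using that A'(1,2) by blast
qed

lemma topology_generated_by_eq_subbase: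
  "topology_generated_by S =
     topology (arbitrary union_of (finite intersection_of (\<lambda>x. x \<in> S) relative_to \<Union>S))"
  unfolding generate_topology_on_eq
proof (rule topology_bases_eq)
  fix U x
  assume "(finite' intersection_of (\<lambda>x. x \<in> S)) U" "x \<in> U"
  then obtain F where F: "finite F" "F \<noteq> {}" "F \<subseteq> S" "U = \<Inter>F"
    unfolding intersection_of_def by auto
  then have "U \<subseteq> \<Union>S" by blast
  then have "(finite intersection_of (\<lambda>x. x \<in> S) relative_to \<Union>S) U"
    unfolding relative_to_def intersection_of_def using F
    by (intro exI[of _ "\<Inter>F"] conjI exI[of _ F]) auto
  then show "\<exists>V. (finite intersection_of (\<lambda>x. x \<in> S) relative_to \<Union>S) V \<and> x \<in> V \<and> V \<subseteq> U"
    using \<open>x \<in> U\<close> by blast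
next
  fix V x
  assume "(finite intersection_of (\<lambda>x. x \<in> S) relative_to \<Union>S) V" "x \<in> V"
  then obtain F where F: "finite F" "F \<subseteq> S" "V = \<Union>S \<inter> \<Inter>F"
    unfolding relative_to_def intersection_of_def by auto
  show "\<exists>U. (finite' intersection_of (\<lambda>x. x \<in> S)) U \<and> x \<in> U \<and> U \<subseteq> V"
  proof (cases "F = {}")
    case True
    then obtain s where s: "s \<in> S" "x \<in> s"
      using F(3) \<open>x \<in> V\<close> by blast
    have "(finite' intersection_of (\<lambda>x. x \<in> S)) s"
      using s(1) by (simp add: finite'_intersection_of_inc)
    moreover have "s \<subseteq> V"
      using F(3) True s(1) by blast
    ultimately show ?thesis using s(2) by blast
  next
    case False
    then have "V = \<Inter>F" using F(2,3) by blast
    then have "(finite' intersection_of (\<lambda>x. x \<in> S)) V"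
      using F False unfolding intersection_of_def by blast
    then show ?thesis
      using \<open>x \<in> V\<close> by blast
  qed
qed
theorem theorem3p7:
  fixes \<sigma> :: "'a::{comm_semiring_0,comm_monoid_mult} set set"
  assumes "noetherian_semiring TYPE('a)"
    and "\<forall>x\<in>\<sigma>. semiring_ideal x"
  shows "compact_space (ideal_topology \<sigma>)"
proof -
  let ?B = "insert \<sigma> {\<sigma> - up_set \<sigma> a | a. semiring_ideal a}"
  have top: "topspace (ideal_topology \<sigma>) = \<sigma>"
    unfolding ideal_topology_def by auto
  show ?thesis
  proof (rule Alexander_subbase)
    show "topology (arbitrary union_of (finite intersection_of (\<lambda>x. x \<in> ?B) relative_to \<Union>?B))
        = ideal_topology \<sigma>"
      unfolding ideal_topology_def topology_generated_by_eq_subbase ..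
  next
    fix C assume C: "C \<subseteq> ?B" "\<Union>C = topspace (ideal_topology \<sigma>)"
    show "\<exists>C'. finite C' \<and> C' \<subseteq> C \<and> \<Union>C' = topspace (ideal_topology \<sigma>)"
    proof (cases "\<sigma> \<in> C")
      case True
      then show ?thesis using top by (intro exI[of _ "{\<sigma>}"]) auto
    next
      case False
      define A where "A = {a. \<sigma> - up_set \<sigma> a \<in> C}"
      have C_eq: "C = (\<lambda>a. \<sigma> - up_set \<sigma> a) ` A"
        using C(1) False unfolding A_def by auto
      then obtain A' where "finite A'" "A' \<subseteq> A" "\<sigma> \<subseteq> (\<Union>a\<in>A'. \<sigma> - up_set \<sigma> a)"
        using noetherian_up_set_complements_finite_subcover[OF assms, of A] C(2) top by auto
      then show ?thesis
        using C_eq top by (intro exI[of _ "(\<lambda>a. \<sigma> - up_set \<sigma> a) ` A'"]) auto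
    qed
  qed
qed

end
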